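(* Let $\mathcal C:m\to l$ and $\mathcal D:l\to n$ be roPGs and $i\in[m]$. Then $[\![\pi^{\mathcal C;\mathcal D}_i]\!]$ equals: $[\![\pi^{\mathcal C}_i]\!]$ if $[\![\pi^{\mathcal C}_i]\!]\in\{\exists^*,\forall^*\}$; $[\![\pi^{\mathcal D}_j]\!]$ if $[\![\pi^{\mathcal C}_i]\!]=j\in[l]$; $[\![\pi^{\mathcal D}_j]\!]$ if $[\![\pi^{\mathcal C}_i]\!]=(r,j)\in\mathbb R\times[l]$ and $[\![\pi^{\mathcal D}_j]\!]\in\{\exists^*,\forall^*\}$; $(r,k)$ if $[\![\pi^{\mathcal C}_i]\!]=(r,j)\in\mathbb R\times[l]$ and $[\![\pi^{\mathcal D}_j]\!]=k\in[n]$; $(r+r',k)$ if $[\![\pi^{\mathcal C}_i]\!]=(r,j)\in\mathbb R\times[l]$ and $[\![\pi^{\mathcal D}_j]\!]=(r',k)\in\mathbb R\times[n]$.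
   Context: Notation: $[k]=\{1,\dots,k\}$; $X+Y$ disjoint union. An roMPG $\mathcal A:m\to n$ is a tuple $(m,n,Q,E,\rho,w)$ with $Q$ a finite set of positions, entrances $[m]$ and exits $[n]$ (pairwise disjoint with $Q$), edges $E\subseteq([m]+Q)\times([n]+Q)$ such that each entrance has exactly one successor and each exit at most one predecessor, roles $\rho:Q\to\{\exists,\forall\}$, weights $w:Q\to\mathbb R$. An roPG is an roMPG in which every element of $[m]+Q$ has at most one successor. For $\mathcal C:m\to l$, $\mathcal D:l\to n$, the sequential composition $\mathcal C;\mathcal D:m\to n$ has positions $Q^{\mathcal C}+Q^{\mathcal D}$ with inherited roles and weights, and edges: the edges of $\mathcal C$ from $[m]+Q^{\mathcal C}$ to $Q^{\mathcal C}$; the edges of $\mathcal D$ from $Q^{\mathcal D}$ to $[n]+Q^{\mathcal D}$; and $(s,s')$ with $s\in[m]+Q^{\mathcal C}$, $s'\in[n]+Q^{\mathcal D}$ whenever some $i\in[l]$ has $(s,i)\in E^{\mathcal C}$ ($i$ as exit of $\mathcal C$) and $(i,s')\in E^{\mathcal D}$ ($i$ as entrance of $\mathcal D$); no other edges. It is again an roPG. For an roPG $\mathcal C:m\to n$ and entrance $i$, $\pi^{\mathcal C}_i=(s_j)_{j\in J}$ ($J=\{0,\dots,M\}$ or $J=\mathbb N$) is the unique sequence with $s_0=i$, $(s_j,s_{j+1})\in E$ whenever $j,j+1\in J$, and $s_M$ without successor if $J$ is finite. An infinite play satisfies the MP condition if $\liminf_{N\to\infty}\frac1N\sum_{j=1}^Nw(s_j)\ge0$.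 With $T(X)=X+\mathbb R\times X+\{\exists^*,\forall^*\}$, the denotation $[\![\pi]\!]\in T([n])$ of a play $\pi=(s_j)_{j\in J}$ is: $s_1$ if $J=\{0,1\}$ and $s_1$ is an exit; $(\sum_{j=1}^{M-1}w(s_j),s_M)$ if $J=\{0,..,M\}$, $M\ge2$, $s_M$ an exit; $\exists^*$ if $J$ is finite and $s_M$ is a position of role $\forall$, or $J$ is infinite and $\pi$ satisfies MP; $\forall^*$ if $J$ is finite and $s_M$ is a position of role $\exists$, or $J$ is infinite and $\pi$ fails MP. *)

theory Defs
  imports Complex_Main "HOL-Library.Extended_Real" "HOL-Library.Liminf_Limsup"
begin

datatype role = RExists | RForall

text \<open>Nodes of a game: entrances [m] (Ent i, 1 \<le> i \<le> m), positions (Pos q, q \<in> Q),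
  exits [n] (Exit k, 1 \<le> k \<le> n).  These three kinds are disjoint by construction.\<close>
datatype 'q node = Ent nat | Pos 'q | Exit nat

record 'q ropmg =
  n_in  :: nat
  n_out :: nat
  posns :: "'q set"
  edges :: "('q node \<times> 'q node) set"
  roles :: "'q \<Rightarrow> role"
  wt    :: "'q \<Rightarrow> real"

definition sources :: "'q ropmg \<Rightarrow> 'q node set" where
  "sources A = Ent ` {1..n_in A} \<union> Pos ` posns A"

definition targets :: "'q ropmg \<Rightarrow> 'q node set" where
  "targets A = Exit ` {1..n_out A} \<union> Pos ` posns A"

definition roMPG :: "'q ropmg \<Rightarrow> nat \<Rightarrow> nat \<Rightarrow> bool" where
  "roMPG A m n \<longleftrightarrow> n_in A = m \<and> n_out A = n \<and> finite (posns A)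
     \<and> edges A \<subseteq> sources A \<times> targets A
     \<and> (\<forall>i\<in>{1..m}. \<exists>!t. (Ent i, t) \<in> edges A)
     \<and> (\<forall>k\<in>{1..n}. \<forall>s s'. (s, Exit k) \<in> edges A \<longrightarrow> (s', Exit k) \<in> edges A \<longrightarrow> s = s')"

definition roPG :: "'q ropmg \<Rightarrow> nat \<Rightarrow> nat \<Rightarrow> bool" where
  "roPG A m n \<longleftrightarrow> roMPG A m n
     \<and> (\<forall>s\<in>sources A. \<forall>t t'. (s, t) \<in> edges A \<longrightarrow> (s, t') \<in> edges A \<longrightarrow> t = t')"

fun inl_src :: "'a node \<Rightarrow> ('a + 'b) node" where
  "inl_src (Ent i) = Ent i"
| "inl_src (Pos q) = Pos (Inl q)"
| "inl_src (Exit k) = Exit k"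

fun inr_tgt :: "'b node \<Rightarrow> ('a + 'b) node" where
  "inr_tgt (Ent i) = Ent i"
| "inr_tgt (Pos q) = Pos (Inr q)"
| "inr_tgt (Exit k) = Exit k"

definition seqc :: "'a ropmg \<Rightarrow> 'b ropmg \<Rightarrow> ('a + 'b) ropmg" where
  "seqc C D = \<lparr> n_in = n_in C, n_out = n_out D,
     posns = Inl ` posns C \<union> Inr ` posns D,
     edges =
       {(inl_src s, Pos (Inl q)) | s q. s \<in> sources C \<and> q \<in> posns C \<and> (s, Pos q) \<in> edges C}
     \<union> {(Pos (Inr q), inr_tgt t) | q t. q \<in> posns D \<and> t \<in> targets D \<and> (Pos q, t) \<in> edges D}
     \<union> {(inl_src s, inr_tgt t) | s t. s \<in> sources C \<and> t \<in> targets D \<and>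
            (\<exists>i\<in>{1..n_out C}. (s, Exit i) \<in> edges C \<and> (Ent i, t) \<in> edges D)},
     roles = case_sum (roles C) (roles D),
     wt = case_sum (wt C) (wt D) \<rparr>"

datatype 'q play = FinPlay "'q node list" | InfPlay "nat \<Rightarrow> 'q node"

definition is_play :: "'q ropmg \<Rightarrow> nat \<Rightarrow> 'q play \<Rightarrow> bool" where
  "is_play A i p \<longleftrightarrow> (case p of
      FinPlay xs \<Rightarrow> xs \<noteq> [] \<and> xs ! 0 = Ent i
         \<and> (\<forall>j. Suc j < length xs \<longrightarrow> (xs ! j, xs ! Suc j) \<in> edges A)
         \<and> (\<nexists>t. (last xs, t) \<in> edges A)
    | InfPlay s \<Rightarrow> s 0 = Ent i \<and> (\<forall>j. (s j, s (Suc j)) \<in> edges A))"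

definition the_play :: "'q ropmg \<Rightarrow> nat \<Rightarrow> 'q play" where
  "the_play A i = (THE p. is_play A i p)"

fun node_wt :: "'q ropmg \<Rightarrow> 'q node \<Rightarrow> real" where
  "node_wt A (Pos q) = wt A q"
| "node_wt A _ = 0"

definition MP_cond :: "'q ropmg \<Rightarrow> (nat \<Rightarrow> 'q node) \<Rightarrow> bool" where
  "MP_cond A s \<longleftrightarrow>
     liminf (\<lambda>N. ereal ((\<Sum>j=1..N. node_wt A (s j)) / real N)) \<ge> 0"

text \<open>T(X) = X + R \<times> X + {\<exists>*, \<forall>*}.\<close>
datatype 'x T = Ret 'x | WRet real 'x | EStar | AStar

definition den :: "'q ropmg \<Rightarrow> 'q play \<Rightarrow> nat T" where
  "den A p = (case p of
      FinPlay xs \<Rightarrow>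
        (let M = length xs - 1 in
         case xs ! M of
           Exit k \<Rightarrow> (if M = 1 then Ret k
                      else WRet (\<Sum>j=1..M-1. node_wt A (xs ! j)) k)
         | Pos q \<Rightarrow> (case roles A q of RForall \<Rightarrow> EStar | RExists \<Rightarrow> AStar)
         | Ent _ \<Rightarrow> undefined)
    | InfPlay s \<Rightarrow> (if MP_cond A s then EStar else AStar))"

definition den_play :: "'q ropmg \<Rightarrow> nat \<Rightarrow> nat T" where
  "den_play A i = den A (the_play A i)"

end

theory Submission
  imports Defs "HOL-Analysis.Extended_Real_Limits"
begin

(* The play of C;D from entrance i first follows the play of C from i, every node tagged Inl.
   If that play never reaches an exit (it is infinite, or stuck at a position), it is the whole
   composed play, and tagging preserves roles and weights.  Otherwise it reaches an exit j, and
   the edge into Exit j together with the edge out of Ent j in D form a single edge of C;D, so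
   the composed play continues as the play of D from j.  The weights of a finite composed play
   then split into the C-part and the D-part, while for an infinite one the mean-payoff condition
   ignores the finite C-prefix: shifting a bounded sequence and adding a constant to its partial
   sums does not change the liminf of the averages.  All plays involved are determined as the
   unique maximal walks from their entrances, roPGs being deterministic. *)

section \<open>Mean payoffs\<close>

lemma liminf_ereal_eq_of_tendsto_diff:
  fixes f g :: "nat \<Rightarrow> real"
  assumes "(\<lambda>N. f N - g N) \<longlonglongrightarrow> 0"
  shows "liminf (\<lambda>N. ereal (f N)) = liminf (\<lambda>N. ereal (g N))"
proof -
  have "(\<lambda>N. ereal (f N - g N)) \<longlonglongrightarrow> 0"
    using assms by (simp add: zero_ereal_def)
  from ereal_liminf_lim_add[OF this, of "\<lambda>N. ereal (g N)"]
  show ?thesis by simp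
qed

lemma sum_atLeastAtMost_shift_split:
  fixes a b :: "nat \<Rightarrow> 'a::comm_monoid_add"
  assumes "\<And>k. 1 \<le> k \<Longrightarrow> a (c + k) = b k" and "c \<le> N"
  shows "(\<Sum>j=1..N. a j) = (\<Sum>j=1..c. a j) + (\<Sum>j=1..N - c. b j)"
proof -
  have "(\<Sum>j=1..N. a j) = (\<Sum>j=1..c. a j) + (\<Sum>j=1 + c..(N - c) + c. a j)"
    using sum.ub_add_nat[of 1 c a "N - c"] assms(2) by (simp add: add.commute)
  also have "(\<Sum>j=1 + c..(N - c) + c. a j) = (\<Sum>j=1..N - c. b j)"
    unfolding sum.shift_bounds_cl_nat_ivl using assms(1) by (simp add: add.commute)
  finally show ?thesis .
qed

lemma mean_payoff_liminf_shift:
  fixes a b :: "nat \<Rightarrow> real"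
  assumes shift: "\<And>k. 1 \<le> k \<Longrightarrow> a (c + k) = b k" and bounded: "\<And>k. \<bar>b k\<bar> \<le> B"
  shows "liminf (\<lambda>N. ereal ((\<Sum>j=1..N. a j) / N)) = liminf (\<lambda>N. ereal ((\<Sum>j=1..N. b j) / N))"
proof (rule liminf_ereal_eq_of_tendsto_diff)
  define K where "K = \<bar>\<Sum>j=1..c. a j\<bar> + c * B"
  have bound: "\<bar>(\<Sum>j=1..N. a j) - (\<Sum>j=1..N. b j)\<bar> \<le> K" if "c \<le> N" for N
  proof -
    let ?tail = "\<Sum>j=1..c. b (N - c + j)"
    have "(\<Sum>j=1..N. b j) = (\<Sum>j=1..N - c. b j) + ?tail"
      using sum_atLeastAtMost_shift_split[of b "N - c" "\<lambda>j. b (N - c + j)" N] that by simp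
    moreover have "(\<Sum>j=1..N. a j) = (\<Sum>j=1..c. a j) + (\<Sum>j=1..N - c. b j)"
      using sum_atLeastAtMost_shift_split[of a c b N] shift that by simp
    ultimately have diff: "(\<Sum>j=1..N. a j) - (\<Sum>j=1..N. b j) = (\<Sum>j=1..c. a j) - ?tail"
      by simp
    have "\<bar>?tail\<bar> \<le> (\<Sum>j=1..c. \<bar>b (N - c + j)\<bar>)"
      by (rule sum_abs)
    also have "\<dots> \<le> c * B"
      using sum_bounded_above[of "{1..c}" "\<lambda>j. \<bar>b (N - c + j)\<bar>" B] bounded by simp
    finally show ?thesis
      unfolding diff K_def using abs_triangle_ineq4[of "\<Sum>j=1..c. a j" ?tail] by linarith
  qed
  have "\<forall>\<^sub>F N in sequentially.
      norm ((\<Sum>j=1..N. a j) / N - (\<Sum>j=1..N. b j) / N) \<le> K / N"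
    using eventually_ge_at_top[of c]
  proof eventually_elim
    case (elim N)
    then show ?case
      using bound[OF elim] by (simp add: diff_divide_distrib[symmetric] divide_right_mono)
  qed
  then show "(\<lambda>N. (\<Sum>j=1..N. a j) / N - (\<Sum>j=1..N. b j) / N) \<longlonglongrightarrow> 0"
    by (rule Lim_null_comparison[OF _ lim_const_over_n])
qed

section \<open>Plays as maximal walks\<close>

definition walk :: "('x \<times> 'x) set \<Rightarrow> (nat \<Rightarrow> 'x) \<Rightarrow> nat \<Rightarrow> bool" where
  "walk E f n \<longleftrightarrow> (\<forall>k<n. (f k, f (Suc k)) \<in> E)"

definition fin_play :: "(nat \<Rightarrow> 'q node) \<Rightarrow> nat \<Rightarrow> 'q play" where
  "fin_play f n = FinPlay (map f [0..<Suc n])"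

lemma walk_mono: "walk E f n \<Longrightarrow> k \<le> n \<Longrightarrow> walk E f k"
  by (simp add: walk_def)

lemma fin_play_cong: "(\<And>k. k \<le> n \<Longrightarrow> f k = g k) \<Longrightarrow> fin_play f n = fin_play g n"
  by (simp add: fin_play_def)

lemma is_play_fin_play:
  "is_play A i (fin_play f n) \<longleftrightarrow>
     f 0 = Ent i \<and> walk (edges A) f n \<and> (\<nexists>t. (f n, t) \<in> edges A)"
  by (auto simp: is_play_def fin_play_def walk_def last_map simp del: upt_Suc)

lemma is_play_InfPlay:
  "is_play A i (InfPlay s) \<longleftrightarrow> s 0 = Ent i \<and> (\<forall>n. walk (edges A) s n)"
  by (auto simp: is_play_def walk_def)

lemma walk_all_iff: "(\<forall>n. walk E s n) \<longleftrightarrow> (\<forall>k. (s k, s (Suc k)) \<in> E)"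
  unfolding walk_def by (meson lessI less_trans_Suc)

lemma is_playE:
  assumes "is_play A i p"
  obtains (Inf) s where "p = InfPlay s" "s 0 = Ent i" "\<And>n. walk (edges A) s n"
  | (Fin) f n where "p = fin_play f n" "f 0 = Ent i" "walk (edges A) f n"
      "\<nexists>t. (f n, t) \<in> edges A"
proof (cases p)
  case (FinPlay xs)
  with assms have "xs \<noteq> []" by (simp add: is_play_def)
  then have "p = fin_play (\<lambda>k. xs ! k) (length xs - 1)"
    using FinPlay by (simp add: fin_play_def map_nth)
  with assms Fin show ?thesis by (simp add: is_play_fin_play)
next
  case (InfPlay s)
  with assms Inf show ?thesis by (simp add: is_play_InfPlay)
qed

lemma den_fin_play:
  "den A (fin_play f n) =
     (case f n of
        Exit k \<Rightarrow> if n = 1 then Ret k else WRet (\<Sum>j=1..n - 1. node_wt A (f j)) k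
      | Pos q \<Rightarrow> (case roles A q of RForall \<Rightarrow> EStar | RExists \<Rightarrow> AStar)
      | Ent _ \<Rightarrow> undefined)"
  by (auto simp: den_def fin_play_def Let_def split: node.split intro!: sum.cong
      simp del: upt_Suc)

lemma den_InfPlay: "den A (InfPlay s) = (if MP_cond A s then EStar else AStar)"
  by (simp add: den_def)

lemma single_valued_walks_agree:
  assumes "single_valued E" "walk E f n" "walk E g n" "f 0 = g 0" "k \<le> n"
  shows "f k = g k"
  using assms(5)
proof (induction k)
  case (Suc k)
  then have "k < n" and "f k = g k" by simp_all
  then have "(g k, f (Suc k)) \<in> E" and "(g k, g (Suc k)) \<in> E"
    using assms(2,3) unfolding walk_def by auto
  then show ?case by (rule single_valuedD[OF assms(1)])
qed (use assms(4) in simp)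

lemma single_valued_maximal_walk_longest:
  assumes "single_valued E" "walk E f n" "\<nexists>t. (f n, t) \<in> E" "walk E g m" "f 0 = g 0"
  shows "m \<le> n"
proof (rule ccontr)
  assume "\<not> m \<le> n"
  then have "walk E g n" and "(g n, g (Suc n)) \<in> E"
    using assms(4) walk_mono[OF assms(4)] by (simp_all add: walk_def)
  moreover have "f n = g n"
    using single_valued_walks_agree[OF assms(1,2) \<open>walk E g n\<close> assms(5)] by simp
  ultimately show False using assms(3) by auto
qed

lemma fin_play_unique:
  assumes sv: "single_valued (edges A)" and fin: "is_play A i (fin_play f n)"
    and "is_play A i p"
  shows "p = fin_play f n"
proof -
  have f: "f 0 = Ent i" "walk (edges A) f n" "\<nexists>t. (f n, t) \<in> edges A"
    using fin by (simp_all add: is_play_fin_play)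
  from \<open>is_play A i p\<close> show ?thesis
  proof (cases rule: is_playE)
    case (Inf s)
    then have "Suc n \<le> n"
      using single_valued_maximal_walk_longest[OF sv f(2,3), of s "Suc n"] f(1) by simp
    then show ?thesis by simp
  next
    case (Fin g m)
    then have "m \<le> n" and "n \<le> m"
      using single_valued_maximal_walk_longest[OF sv f(2,3), of g m]
        single_valued_maximal_walk_longest[OF sv Fin(3,4) f(2)] f(1) by simp_all
    then have "m = n" by simp
    have "fin_play g n = fin_play f n"
      by (rule fin_play_cong, rule single_valued_walks_agree[OF sv])
        (use Fin f \<open>m = n\<close> in simp_all)
    then show ?thesis using Fin \<open>m = n\<close> by simp
  qed
qed

lemma is_play_unique:
  assumes sv: "single_valued (edges A)" and p: "is_play A i p" and p': "is_play A i p'"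
  shows "p = p'"
  using p
proof (cases rule: is_playE)
  case (Fin f n)
  then show ?thesis using fin_play_unique[OF sv _ p'] p by simp
next
  case (Inf s)
  from p' show ?thesis
  proof (cases rule: is_playE)
    case (Fin f n)
    then show ?thesis using fin_play_unique[OF sv _ p] p' by simp
  next
    case (Inf s')
    have "s k = s' k" for k
      using single_valued_walks_agree[OF sv, of s k s' k] \<open>s 0 = Ent i\<close> \<open>\<And>n. walk (edges A) s n\<close>
        Inf by simp
    then show ?thesis using \<open>p = InfPlay s\<close> Inf by auto
  qed
qed

lemma is_play_exists: "\<exists>p. is_play A i p"
proof -
  define w where "w k = ((\<lambda>x. SOME t. (x, t) \<in> edges A) ^^ k) (Ent i)" for k
  have w_step: "(w k, w (Suc k)) \<in> edges A" if "\<exists>t. (w k, t) \<in> edges A" for k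
    using someI_ex[OF that] by (simp add: w_def)
  show ?thesis
  proof (cases "\<forall>k. \<exists>t. (w k, t) \<in> edges A")
    case True
    then have "is_play A i (InfPlay w)"
      by (simp add: is_play_InfPlay walk_def w_step) (simp add: w_def)
    then show ?thesis ..
  next
    case False
    define n where "n = (LEAST k. \<nexists>t. (w k, t) \<in> edges A)"
    have "\<nexists>t. (w n, t) \<in> edges A"
      using False LeastI_ex[of "\<lambda>k. \<nexists>t. (w k, t) \<in> edges A"] by (auto simp: n_def)
    moreover have "walk (edges A) w n"
      unfolding walk_def using not_less_Least w_step n_def by blast
    ultimately have "is_play A i (fin_play w n)"
      by (simp add: is_play_fin_play) (simp add: w_def)
    then show ?thesis ..
  qed
qed

lemma the_play_eqI: "single_valued (edges A) \<Longrightarrow> is_play A i p \<Longrightarrow> the_play A i = p"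
  unfolding the_play_def using is_play_unique by blast

lemma is_play_the_play: "single_valued (edges A) \<Longrightarrow> is_play A i (the_play A i)"
  using is_play_exists the_play_eqI by metis

lemma roMPG_edge_endpoints:
  assumes "roMPG A m n" and "(s, t) \<in> edges A"
  shows "s \<in> sources A" and "t \<in> targets A"
  using assms unfolding roMPG_def by auto

lemma roMPG_inner_node_Pos:
  assumes "roMPG A m n" and "(x, y) \<in> edges A" and "(y, z) \<in> edges A"
  obtains q where "y = Pos q" and "q \<in> posns A"
  using roMPG_edge_endpoints[OF assms(1,2)] roMPG_edge_endpoints[OF assms(1,3)]
  by (auto simp: sources_def targets_def)

lemma roMPG_Exit_no_succ: "roMPG A m n \<Longrightarrow> (Exit k, t) \<notin> edges A"
  using roMPG_edge_endpoints(1) by (fastforce simp: sources_def)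

lemma roPG_single_valued: "roPG A m n \<Longrightarrow> single_valued (edges A)"
  unfolding roPG_def roMPG_def single_valued_def by blast

lemma abs_node_wt_le_sum:
  assumes "finite (posns A)" and "x \<in> sources A \<union> targets A"
  shows "\<bar>node_wt A x\<bar> \<le> (\<Sum>q\<in>posns A. \<bar>wt A q\<bar>)"
proof (cases x)
  case (Pos q)
  with assms(2) have "q \<in> posns A"
    by (auto simp: sources_def targets_def)
  with Pos show ?thesis
    using member_le_sum[of q "posns A" "\<lambda>q. \<bar>wt A q\<bar>"] assms(1) by simp
qed (simp_all add: sum_nonneg)

lemma roMPG_Ent_succ:
  assumes "roMPG A m n" and "i \<in> {1..m}"
  obtains t where "(Ent i, t) \<in> edges A"
proof -
  have "\<forall>i\<in>{1..m}. \<exists>!t. (Ent i, t) \<in> edges A"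
    using assms(1) unfolding roMPG_def by (elim conjE)
  with assms(2) that show ?thesis by blast
qed

lemma fin_play_from_entrance_last:
  assumes "roMPG A m n" and "i \<in> {1..m}" and "is_play A i (fin_play f k)"
  shows "0 < k" and "f k \<in> targets A"
proof -
  obtain t where "(Ent i, t) \<in> edges A"
    using roMPG_Ent_succ[OF assms(1,2)] .
  with assms(3) show "0 < k"
    unfolding is_play_fin_play by (cases k) auto
  then obtain c where k: "k = Suc c"
    using gr0_implies_Suc by blast
  with assms(3) have "(f c, f k) \<in> edges A"
    by (simp add: is_play_fin_play walk_def)
  then show "f k \<in> targets A"
    by (rule roMPG_edge_endpoints(2)[OF assms(1)])
qed

lemma play_from_entranceE:
  assumes "roMPG A m n" and "i \<in> {1..m}" and "is_play A i p"
  obtains (Inf) s where "p = InfPlay s" and "s 0 = Ent i" and "\<And>k. walk (edges A) s k"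
  | (Stuck) f k q where "p = fin_play f k" and "f 0 = Ent i" and "walk (edges A) f k"
      and "f k = Pos q" and "\<nexists>t. (Pos q, t) \<in> edges A"
  | (Exit) f c j where "p = fin_play f (Suc c)" and "f 0 = Ent i"
      and "walk (edges A) f (Suc c)" and "f (Suc c) = Exit j" and "j \<in> {1..n}"
  using assms(3)
proof (cases rule: is_playE)
  case (Inf s)
  then show ?thesis by (rule that(1))
next
  case (Fin f k)
  with assms have "0 < k" and "f k \<in> targets A"
    using fin_play_from_entrance_last by blast+
  moreover have "n_out A = n"
    using assms(1) by (simp add: roMPG_def)
  ultimately consider q where "f k = Pos q" | j where "f k = Exit j" and "j \<in> {1..n}"
    unfolding targets_def by auto
  then show ?thesis
  proof cases
    case (1 q)
    show ?thesis by (rule Stuck[of f k q]) (use Fin 1 in simp_all)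
  next
    case (2 j)
    obtain c where "k = Suc c"
      using \<open>0 < k\<close> gr0_implies_Suc by blast
    show ?thesis by (rule Exit[of f c j]) (use Fin 2 \<open>k = Suc c\<close> in simp_all)
  qed
qed

section \<open>Plays of a sequential composition\<close>

lemma map_node_eq_iff [simp]:
  "map_node f x = Ent i \<longleftrightarrow> x = Ent i"
  "map_node f x = Exit k \<longleftrightarrow> x = Exit k"
  "map_node f x = Pos y \<longleftrightarrow> (\<exists>q. x = Pos q \<and> y = f q)"
  "Ent i = map_node f x \<longleftrightarrow> x = Ent i"
  "Exit k = map_node f x \<longleftrightarrow> x = Exit k"
  "Pos y = map_node f x \<longleftrightarrow> (\<exists>q. x = Pos q \<and> y = f q)"
  by (cases x; auto)+

lemma inl_src_eq_map_node: "inl_src x = map_node Inl x"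
  by (cases x) simp_all

lemma inr_tgt_eq_map_node: "inr_tgt x = map_node Inr x"
  by (cases x) simp_all

lemma map_node_Inl_eq_iff [simp]: "map_node Inl x = map_node Inl y \<longleftrightarrow> x = y"
  by (cases x; cases y) simp_all

lemma map_node_Inr_eq_iff [simp]: "map_node Inr x = map_node Inr y \<longleftrightarrow> x = y"
  by (cases x; cases y) simp_all

lemma roles_seqc [simp]: "roles (seqc C D) = case_sum (roles C) (roles D)"
  by (simp add: seqc_def)

lemma node_wt_seqc_Inl [simp]: "node_wt (seqc C D) (map_node Inl x) = node_wt C x"
  by (cases x) (simp_all add: seqc_def)

lemma node_wt_seqc_Inr [simp]: "node_wt (seqc C D) (map_node Inr x) = node_wt D x"
  by (cases x) (simp_all add: seqc_def)

lemma edges_seqcE: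
  assumes "(x, t) \<in> edges (seqc C D)"
  obtains (Left) s q where "x = map_node Inl s" and "t = Pos (Inl q)"
      and "s \<in> sources C" and "(s, Pos q) \<in> edges C"
  | (Right) q u where "x = Pos (Inr q)" and "t = map_node Inr u" and "(Pos q, u) \<in> edges D"
  | (Junction) s j u where "x = map_node Inl s" and "t = map_node Inr u"
      and "s \<in> sources C" and "(s, Exit j) \<in> edges C" and "(Ent j, u) \<in> edges D"
  using assms unfolding seqc_def inl_src_eq_map_node inr_tgt_eq_map_node by auto

lemma seqc_no_succ_Inl:
  assumes "\<nexists>t. (Pos q, t) \<in> edges C"
  shows "\<nexists>t. (Pos (Inl q), t) \<in> edges (seqc C D)"
proof
  assume "\<exists>t. (Pos (Inl q), t) \<in> edges (seqc C D)"
  then obtain t where "(Pos (Inl q), t) \<in> edges (seqc C D)" ..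
  then show False
    by (cases rule: edges_seqcE) (use assms in auto)
qed

lemma seqc_no_succ_Inr:
  assumes "x \<in> targets D" and "\<nexists>t. (x, t) \<in> edges D"
  shows "\<nexists>t. (map_node Inr x, t) \<in> edges (seqc C D)"
proof
  assume "\<exists>t. (map_node Inr x, t) \<in> edges (seqc C D)"
  then obtain t where "(map_node Inr x, t) \<in> edges (seqc C D)" ..
  then show False
    by (cases rule: edges_seqcE) (use assms in \<open>auto simp: targets_def sources_def\<close>)
qed

(* The exit f (Suc c) of C and the entrance g 0 of D are merged into one edge of C;D, so
   position c of the composed walk is followed directly by g 1. *)
definition seq_walk :: "(nat \<Rightarrow> 'a node) \<Rightarrow> nat \<Rightarrow> (nat \<Rightarrow> 'b node) \<Rightarrow> nat \<Rightarrow> ('a + 'b) node" where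
  "seq_walk f c g k = (if k \<le> c then map_node Inl (f k) else map_node Inr (g (k - c)))"

definition seq_play :: "(nat \<Rightarrow> 'a node) \<Rightarrow> nat \<Rightarrow> 'b play \<Rightarrow> ('a + 'b) play" where
  "seq_play f c p = (case p of
      FinPlay ys \<Rightarrow> fin_play (seq_walk f c (\<lambda>k. ys ! k)) (c + (length ys - 1))
    | InfPlay g \<Rightarrow> InfPlay (seq_walk f c g))"

lemma seq_play_fin_play: "seq_play f c (fin_play g k) = fin_play (seq_walk f c g) (c + k)"
proof -
  have "seq_play f c (fin_play g k) = fin_play (seq_walk f c (\<lambda>h. map g [0..<Suc k] ! h)) (c + k)"
    by (simp add: seq_play_def fin_play_def[of g] del: upt_Suc)
  also have "\<dots> = fin_play (seq_walk f c g) (c + k)"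
    by (rule fin_play_cong) (simp add: seq_walk_def nth_map_upt del: upt_Suc)
  finally show ?thesis .
qed

lemma sum_node_wt_seq_walk:
  "(\<Sum>h=1..c + k. node_wt (seqc C D) (seq_walk f c g h))
     = (\<Sum>h=1..c. node_wt C (f h)) + (\<Sum>h=1..k. node_wt D (g h))"
proof -
  have "(\<Sum>h=1..c. node_wt (seqc C D) (seq_walk f c g h)) = (\<Sum>h=1..c. node_wt C (f h))"
    by (rule sum.cong) (simp_all add: seq_walk_def)
  moreover have "(\<Sum>h=1..c + k. node_wt (seqc C D) (seq_walk f c g h))
      = (\<Sum>h=1..c. node_wt (seqc C D) (seq_walk f c g h)) + (\<Sum>h=1..k. node_wt D (g h))"
    using sum_atLeastAtMost_shift_split[of "\<lambda>h. node_wt (seqc C D) (seq_walk f c g h)" c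
        "\<lambda>h. node_wt D (g h)" "c + k"]
    by (simp add: seq_walk_def)
  ultimately show ?thesis by simp
qed

lemma MP_cond_seqc_seq_walk:
  assumes "\<And>k. \<bar>node_wt D (g k)\<bar> \<le> B"
  shows "MP_cond (seqc C D) (seq_walk f c g) = MP_cond D g"
  unfolding MP_cond_def
  using mean_payoff_liminf_shift[of "\<lambda>h. node_wt (seqc C D) (seq_walk f c g h)" c
      "\<lambda>h. node_wt D (g h)" B] assms
  by (simp add: seq_walk_def)

lemma den_seqc_InfPlay_Inl: "den (seqc C D) (InfPlay (map_node Inl \<circ> s)) = den C (InfPlay s)"
  by (simp add: den_InfPlay MP_cond_def)

lemma den_seqc_fin_play_Inl: "den (seqc C D) (fin_play (map_node Inl \<circ> f) k) = den C (fin_play f k)"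
  by (cases "f k") (simp_all add: den_fin_play)

fun add_weight :: "real \<Rightarrow> 'x T \<Rightarrow> 'x T" where
  "add_weight r (Ret k) = WRet r k"
| "add_weight r (WRet r' k) = WRet (r + r') k"
| "add_weight r EStar = EStar"
| "add_weight r AStar = AStar"

(* Kleisli extension of the monad T: exits of the first game feed the entrances of the second,
   and the accumulated weights add up. *)
fun bind_T :: "'x T \<Rightarrow> ('x \<Rightarrow> 'y T) \<Rightarrow> 'y T" where
  "bind_T (Ret j) F = F j"
| "bind_T (WRet r j) F = add_weight r (F j)"
| "bind_T EStar F = EStar"
| "bind_T AStar F = AStar"

locale composable_roPGs =
  fixes C :: "'a ropmg" and D :: "'b ropmg" and m l n :: nat
  assumes roPG_C: "roPG C m l" and roPG_D: "roPG D l n"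
begin

lemma roMPG_C: "roMPG C m l"
  using roPG_C by (simp add: roPG_def)

lemma roMPG_D: "roMPG D l n"
  using roPG_D by (simp add: roPG_def)

lemma seqc_edge_Inl:
  assumes "(s, Pos q) \<in> edges C"
  shows "(map_node Inl s, Pos (Inl q)) \<in> edges (seqc C D)"
proof -
  have "s \<in> sources C" and "q \<in> posns C"
    using roMPG_edge_endpoints[OF roMPG_C assms] by (auto simp: targets_def)
  with assms show ?thesis
    unfolding seqc_def inl_src_eq_map_node by auto
qed

lemma seqc_edge_Inr:
  assumes "(Pos q, t) \<in> edges D"
  shows "(Pos (Inr q), map_node Inr t) \<in> edges (seqc C D)"
proof -
  have "q \<in> posns D" and "t \<in> targets D"
    using roMPG_edge_endpoints[OF roMPG_D assms] by (auto simp: sources_def)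
  with assms show ?thesis
    unfolding seqc_def inr_tgt_eq_map_node by auto
qed

lemma seqc_edge_junction:
  assumes "(s, Exit j) \<in> edges C" and "(Ent j, t) \<in> edges D"
  shows "(map_node Inl s, map_node Inr t) \<in> edges (seqc C D)"
proof -
  have "s \<in> sources C" and "j \<in> {1..n_out C}" and "t \<in> targets D"
    using roMPG_edge_endpoints[OF roMPG_C assms(1)] roMPG_edge_endpoints[OF roMPG_D assms(2)]
    by (auto simp: targets_def)
  with assms show ?thesis
    unfolding seqc_def inl_src_eq_map_node inr_tgt_eq_map_node by auto
qed

lemma single_valued_seqc: "single_valued (edges (seqc C D))"
proof (rule single_valuedI)
  have svC: "t = t'" if "(x, t) \<in> edges C" and "(x, t') \<in> edges C" for x t t'
    using single_valuedD[OF roPG_single_valued[OF roPG_C] that] .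
  have svD: "t = t'" if "(x, t) \<in> edges D" and "(x, t') \<in> edges D" for x t t'
    using single_valuedD[OF roPG_single_valued[OF roPG_D] that] .
  fix x t t'
  assume "(x, t) \<in> edges (seqc C D)" and "(x, t') \<in> edges (seqc C D)"
  then show "t = t'"
    by (elim edges_seqcE; simp; blast dest: svC svD)
qed

lemma walk_seqc_Inl:
  assumes walk: "walk (edges C) f k" and not_exit: "\<And>j. f k \<noteq> Exit j"
  shows "walk (edges (seqc C D)) (map_node Inl \<circ> f) k"
  unfolding walk_def
proof (intro allI impI)
  fix h
  assume "h < k"
  then have edge: "(f h, f (Suc h)) \<in> edges C"
    using walk by (simp add: walk_def)
  have "f (Suc h) \<noteq> Exit j" for j
  proof (cases "Suc h = k")
    case False
    with \<open>h < k\<close> have "(f (Suc h), f (Suc (Suc h))) \<in> edges C"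
      using walk by (simp add: walk_def)
    then show ?thesis
      using roMPG_Exit_no_succ[OF roMPG_C] by metis
  qed (use not_exit in simp)
  then obtain q where "f (Suc h) = Pos q"
    using roMPG_edge_endpoints(2)[OF roMPG_C edge] by (auto simp: targets_def)
  then show "((map_node Inl \<circ> f) h, (map_node Inl \<circ> f) (Suc h)) \<in> edges (seqc C D)"
    using seqc_edge_Inl edge by simp
qed

lemma walk_seqc_seq_walk:
  assumes f: "walk (edges C) f (Suc c)" "f (Suc c) = Exit j"
    and g: "walk (edges D) g k" "g 0 = Ent j"
  shows "walk (edges (seqc C D)) (seq_walk f c g) (c + k)"
  unfolding walk_def
proof (intro allI impI)
  fix h
  assume h: "h < c + k"
  have "(f c, f (Suc c)) \<in> edges C" and walk_c: "walk (edges C) f c"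
    using f(1) by (simp_all add: walk_def)
  then have "f c \<noteq> Exit j'" for j'
    using roMPG_Exit_no_succ[OF roMPG_C] by metis
  then have prefix: "walk (edges (seqc C D)) (map_node Inl \<circ> f) c"
    by (rule walk_seqc_Inl[OF walk_c])
  consider "h < c" | "h = c" | "c < h" by linarith
  then show "(seq_walk f c g h, seq_walk f c g (Suc h)) \<in> edges (seqc C D)"
  proof cases
    case 1
    then show ?thesis using prefix by (simp add: walk_def seq_walk_def)
  next
    case 2
    have "(f c, f (Suc c)) \<in> edges C"
      using f(1) by (simp add: walk_def)
    then have "(f c, Exit j) \<in> edges C"
      using f(2) by simp
    moreover have "(Ent j, g 1) \<in> edges D"
    proof -
      have "0 < k" using h 2 by simp
      then have "(g 0, g 1) \<in> edges D"
        using g(1) by (simp add: walk_def)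
      then show ?thesis using g(2) by simp
    qed
    ultimately show ?thesis
      using 2 seqc_edge_junction by (simp add: seq_walk_def)
  next
    case 3
    define d where "d = h - Suc c"
    with 3 have d: "h = c + Suc d" by simp
    have "(g d, g (Suc d)) \<in> edges D" and next_edge: "(g (Suc d), g (Suc (Suc d))) \<in> edges D"
      using g(1) h d by (simp_all add: walk_def)
    then obtain q where "g (Suc d) = Pos q"
      by (rule roMPG_inner_node_Pos[OF roMPG_D])
    then show ?thesis
      using seqc_edge_Inr next_edge d by (simp add: seq_walk_def)
  qed
qed

lemma is_play_seqc_InfPlay_Inl:
  assumes "is_play C i (InfPlay s)"
  shows "is_play (seqc C D) i (InfPlay (map_node Inl \<circ> s))"
proof -
  have "(s k, s (Suc k)) \<in> edges C" for k
    using assms by (simp add: is_play_InfPlay walk_all_iff)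
  then have "s k \<noteq> Exit j" for k j
    using roMPG_Exit_no_succ[OF roMPG_C] by metis
  with assms show ?thesis
    by (simp add: is_play_InfPlay walk_seqc_Inl)
qed

lemma is_play_seqc_fin_play_Inl:
  assumes "is_play C i (fin_play f k)" and "f k = Pos q"
  shows "is_play (seqc C D) i (fin_play (map_node Inl \<circ> f) k)"
  using assms walk_seqc_Inl[of f k] seqc_no_succ_Inl[of q C D] by (simp add: is_play_fin_play)

lemma is_play_seqc_seq_play:
  assumes C_play: "is_play C i (fin_play f (Suc c))" "f (Suc c) = Exit j"
    and j: "j \<in> {1..l}" and D_play: "is_play D j p"
  shows "is_play (seqc C D) i (seq_play f c p)"
proof -
  have f: "f 0 = Ent i" "walk (edges C) f (Suc c)"
    using C_play(1) by (simp_all add: is_play_fin_play)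
  have start: "seq_walk f c g 0 = Ent i" for g :: "nat \<Rightarrow> 'b node"
    using f(1) by (simp add: seq_walk_def)
  from D_play show ?thesis
  proof (cases rule: is_playE)
    case (Inf g)
    have "walk (edges (seqc C D)) (seq_walk f c g) h" for h
      using walk_seqc_seq_walk[OF f(2) C_play(2) Inf(3)[of h] Inf(2)] by (rule walk_mono) simp
    then show ?thesis
      using Inf(1) start by (simp add: seq_play_def is_play_InfPlay)
  next
    case (Fin g k)
    have "0 < k" and "g k \<in> targets D"
      using fin_play_from_entrance_last[OF roMPG_D j] D_play Fin(1) by simp_all
    then have "\<nexists>t. (seq_walk f c g (c + k), t) \<in> edges (seqc C D)"
      using seqc_no_succ_Inr Fin(4) by (simp add: seq_walk_def)
    moreover have "walk (edges (seqc C D)) (seq_walk f c g) (c + k)"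
      by (rule walk_seqc_seq_walk[OF f(2) C_play(2) Fin(3,2)])
    ultimately show ?thesis
      using Fin(1) start by (simp add: seq_play_fin_play is_play_fin_play)
  qed
qed

lemma den_seq_play:
  assumes "f (Suc c) = Exit j" and j: "j \<in> {1..l}" and D_play: "is_play D j p"
    and F: "F j = den D p"
  shows "den (seqc C D) (seq_play f c p) = bind_T (den C (fin_play f (Suc c))) F"
proof -
  let ?r = "\<Sum>h=1..c. node_wt C (f h)"
  have "bind_T (den C (fin_play f (Suc c))) F
      = (if c = 0 then den D p else add_weight ?r (den D p))"
    using assms(1) F by (simp add: den_fin_play)
  also from roMPG_D j D_play have "\<dots> = den (seqc C D) (seq_play f c p)"
  proof (cases rule: play_from_entranceE)
    case (Inf g)
    have "\<bar>node_wt D (g k)\<bar> \<le> (\<Sum>q\<in>posns D. \<bar>wt D q\<bar>)" for k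
    proof -
      have "(g k, g (Suc k)) \<in> edges D"
        using Inf(3)[of "Suc k"] by (simp add: walk_def)
      then have "g k \<in> sources D"
        by (rule roMPG_edge_endpoints(1)[OF roMPG_D])
      moreover have "finite (posns D)"
        using roMPG_D by (simp add: roMPG_def)
      ultimately show ?thesis
        using abs_node_wt_le_sum by blast
    qed
    then have "MP_cond (seqc C D) (seq_walk f c g) = MP_cond D g"
      by (rule MP_cond_seqc_seq_walk)
    then show ?thesis
      using Inf(1) by (simp add: seq_play_def den_InfPlay)
  next
    case (Stuck g k q)
    then have "0 < k"
      by (cases k) simp_all
    with Stuck show ?thesis
      by (simp add: seq_play_fin_play den_fin_play seq_walk_def split: role.split)
  next
    case (Exit g d k)
    then show ?thesis
      using sum_node_wt_seq_walk[of C D f c g d]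
      by (cases "c = 0"; cases "d = 0") (simp_all add: seq_play_fin_play den_fin_play seq_walk_def)
  qed
  finally show ?thesis ..
qed

lemma den_play_seqc:
  assumes i: "i \<in> {1..m}"
  shows "den_play (seqc C D) i = bind_T (den_play C i) (den_play D)"
proof -
  have C_play: "is_play C i (the_play C i)"
    by (rule is_play_the_play[OF roPG_single_valued[OF roPG_C]])
  from roMPG_C i C_play show ?thesis
  proof (cases rule: play_from_entranceE)
    case (Inf s)
    with C_play have "the_play (seqc C D) i = InfPlay (map_node Inl \<circ> s)"
      by (intro the_play_eqI single_valued_seqc is_play_seqc_InfPlay_Inl) simp
    then have "den_play (seqc C D) i = den C (InfPlay s)"
      by (simp add: den_play_def den_seqc_InfPlay_Inl)
    then show ?thesis
      using Inf(1) by (simp add: den_play_def den_InfPlay)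
  next
    case (Stuck f k q)
    with C_play have "the_play (seqc C D) i = fin_play (map_node Inl \<circ> f) k"
      by (intro the_play_eqI single_valued_seqc is_play_seqc_fin_play_Inl) simp_all
    then show ?thesis
      using Stuck(1,4) by (simp add: den_play_def den_seqc_fin_play_Inl den_fin_play split: role.split)
  next
    case (Exit f c j)
    have D_play: "is_play D j (the_play D j)"
      by (rule is_play_the_play[OF roPG_single_valued[OF roPG_D]])
    with C_play Exit have "the_play (seqc C D) i = seq_play f c (the_play D j)"
      by (intro the_play_eqI single_valued_seqc is_play_seqc_seq_play) simp_all
    then show ?thesis
      using den_seq_play[of f c j "the_play D j" "den_play D"] Exit D_play
      by (simp add: den_play_def)
  qed
qed

end

theorem proposition3p2:
  fixes C :: "'a ropmg" and D :: "'b ropmg" and m l n i :: nat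
  assumes "roPG C m l" and "roPG D l n" and "i \<in> {1..m}"
  shows "den_play (seqc C D) i =
    (case den_play C i of
       EStar \<Rightarrow> EStar
     | AStar \<Rightarrow> AStar
     | Ret j \<Rightarrow> den_play D j
     | WRet r j \<Rightarrow>
         (case den_play D j of
            EStar \<Rightarrow> EStar
          | AStar \<Rightarrow> AStar
          | Ret k \<Rightarrow> WRet r k
          | WRet r' k \<Rightarrow> WRet (r + r') k))"
proof -
  interpret composable_roPGs C D m l n
    using assms(1,2) by unfold_locales
  show ?thesis
    using den_play_seqc[OF assms(3)] by (simp split: T.split)
qed

end
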